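(* Let $\mathcal G$ be a network with input nodes $\iota_1,\dots,\iota_n$ and output node $o$ such that $o$ is downstream from every input node. Suppose the Jacobian $J$ of the admissible vector field is generic and all its self-couplings $f_{\sigma,x_\sigma}$ are not identically zero. Then $\det\langle H\rangle$ is not identically zero.
   Context: Node $b$ is downstream from $a$ if there is a directed path from $a$ to $b$. An admissible vector field assigns a real variable $x_j$ to each node, with $\dot x_{\iota_m}=f_{\iota_m}(X,\mathcal I)$ for input nodes and $\dot x_j=f_j(X)$ otherwise ($\mathcal I\in\mathbb R$ a single input parameter), smooth, with $f_{\iota_m,\mathcal I}=\partial f_{\iota_m}/\partial\mathcal I\neq0$. Writing $f_{\sigma_i,\sigma_j}=\partial f_{\sigma_i}/\partial x_{\sigma_j}$, the vector field (or its Jacobian $J=(f_{\sigma_i,\sigma_j})$) is generic if (a) $f_{\sigma_i,\sigma_j}\equiv0$ if and only if there is no arrow $\sigma_j\to\sigma_i$, and (b) there is no polynomial relation among the $f_{\sigma_i,\sigma_j}$ (so they may be regarded as algebraically independent variables). The generalized homeostasis matrix $\langle H\rangle$ is obtained from $J$ (nodes ordered with $o$ last) by replacing the last column by the column with $-f_{\iota_m,\mathcal I}$ in row $\iota_m$ and $0$ elsewhere. *)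

theory Defs
  imports "HOL-Analysis.Analysis"
begin

text \<open>Network: nodes form a finite type 'n; E a b means there is an arrow a \<rightarrow> b.
  Node b is downstream from a iff there is a directed path from a to b.\<close>

definition downstream :: "('n \<Rightarrow> 'n \<Rightarrow> bool) \<Rightarrow> 'n \<Rightarrow> 'n \<Rightarrow> bool" where
  "downstream E b a \<longleftrightarrow> E\<^sup>*\<^sup>* a b"

text \<open>Generic Jacobian: entry (i,j) is the free variable v i j (standing for f_{i,j})
  if there is an arrow j \<rightarrow> i, or if i = j (self-couplings are not identically zero);
  it is identically zero otherwise.\<close>

definition generic_jacobian :: "('n::finite \<Rightarrow> 'n \<Rightarrow> bool) \<Rightarrow> ('n \<Rightarrow> 'n \<Rightarrow> real) \<Rightarrow> real^'n^'n" where
  "generic_jacobian E v = (\<chi> i j. if i = j \<or> E j i then v i j else 0)"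

text \<open>Generalized homeostasis matrix: column o of J replaced by the column with
  - f_{iota,I} (free variable c iota) in the input rows and 0 elsewhere.\<close>

definition gen_homeostasis_matrix ::
  "('n::finite \<Rightarrow> 'n \<Rightarrow> bool) \<Rightarrow> 'n set \<Rightarrow> 'n \<Rightarrow> ('n \<Rightarrow> 'n \<Rightarrow> real) \<Rightarrow> ('n \<Rightarrow> real) \<Rightarrow> real^'n^'n" where
  "gen_homeostasis_matrix E inputs out v c =
     (\<chi> i j. if j = out then (if i \<in> inputs then - c i else 0) else generic_jacobian E v $ i $ j)"

end

theory Submission
  imports Defs "HOL-Library.Transitive_Closure_Table"
begin

text \<open>In the Leibniz expansion of the determinant it suffices to exhibit one permutation \<open>p\<close>
  all of whose entries \<open>(i, p i)\<close> are not identically zero: specialising the free variables to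
  the permutation matrix of \<open>p\<close> then gives the determinant \<open>sign p \<noteq> 0\<close>. Such a \<open>p\<close> comes from
  a simple path \<open>a = x\<^sub>0 \<rightarrow> x\<^sub>1 \<rightarrow> \<dots> \<rightarrow> x\<^sub>k = o\<close> from an input node \<open>a\<close>: send \<open>a\<close> to \<open>o\<close>
  (an entry of the input column), each \<open>x\<^sub>j\<^sub>+\<^sub>1\<close> to \<open>x\<^sub>j\<close> (the coupling of the arrow
  \<open>x\<^sub>j \<rightarrow> x\<^sub>j\<^sub>+\<^sub>1\<close>), and fix every other node (a self-coupling).\<close>

lemma det_permutation_matrix:
  assumes "p permutes (UNIV :: 'n::finite set)"
  shows "det (\<chi> i j. if p i = j then 1 else 0 :: 'a::comm_ring_1^'n^'n) = of_int (sign p)"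
proof -
  have "(\<chi> i j. if p i = j then 1 else 0 :: 'a^'n^'n) = (\<chi> i. mat 1 $ p i)"
    by (simp add: vec_eq_iff mat_def)
  then show ?thesis
    by (simp add: det_permute_rows[OF assms])
qed

lemma rtrancl_path_permutation:
  assumes "rtrancl_path E a xs b" and "distinct (a # xs)"
  shows "\<exists>p. p permutes set (a # xs) \<and> p a = b \<and> (\<forall>i. i \<noteq> a \<longrightarrow> p i = i \<or> E (p i) i)"
  using assms
proof (induction rule: rtrancl_path.induct)
  case (base x)
  show ?case
    by (auto intro: exI[of _ id] permutes_id)
next
  case (step x y ys z)
  then obtain p where p: "p permutes set (y # ys)" and "p y = z"
    and p_edges: "\<forall>i. i \<noteq> y \<longrightarrow> p i = i \<or> E (p i) i"
    by auto
  have "p x = x"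
    using p step.prems permutes_not_in by fastforce
  define q where "q = p \<circ> Transposition.transpose x y"
  have "q permutes set (x # y # ys)"
    unfolding q_def
    by (intro permutes_compose permutes_swap_id permutes_subset[OF p]) auto
  moreover have "q x = z"
    using \<open>p y = z\<close> by (simp add: q_def)
  moreover have "q i = i \<or> E (q i) i" if "i \<noteq> x" for i
    using that \<open>p x = x\<close> \<open>E x y\<close> p_edges by (cases "i = y") (auto simp: q_def)
  ultimately show ?case
    by blast
qed

lemma rtranclp_permutation:
  assumes "E\<^sup>*\<^sup>* a b"
  obtains p where "p permutes UNIV" and "p a = b" and "\<And>i. i \<noteq> a \<Longrightarrow> p i = i \<or> E (p i) i"
proof -
  obtain xs where "rtrancl_path E a xs b" and "distinct (a # xs)"
    using assms rtrancl_path_distinct unfolding rtranclp_eq_rtrancl_path by metis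
  then show ?thesis
    using rtrancl_path_permutation permutes_subset that by (metis subset_UNIV)
qed

theorem propositionB3:
  fixes E :: "'n::finite \<Rightarrow> 'n \<Rightarrow> bool"
    and inputs :: "'n set" and out :: 'n
  assumes "inputs \<noteq> {}"
    and "\<forall>\<iota>\<in>inputs. downstream E out \<iota>"
  shows "\<not> (\<forall>v c. det (gen_homeostasis_matrix E inputs out v c) = 0)"
proof -
  obtain a where "a \<in> inputs"
    using assms(1) by blast
  then obtain p where p: "p permutes UNIV" and "p a = out"
    and p_edges: "\<And>i. i \<noteq> a \<Longrightarrow> p i = i \<or> E (p i) i"
    using assms(2) rtranclp_permutation unfolding downstream_def by metis
  define v :: "'n \<Rightarrow> 'n \<Rightarrow> real" where "v i j = (if p i = j then 1 else 0)" for i j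
  define c :: "'n \<Rightarrow> real" where "c i = (if i = a then -1 else 0)" for i
  have p_out: "p i = out \<longleftrightarrow> i = a" for i
    using \<open>p a = out\<close> permutes_inj[OF p] by (auto dest: injD)
  have p_coupling: "i = p i \<or> E (p i) i" if "p i \<noteq> out" for i
    using p_edges p_out that by metis
  have "gen_homeostasis_matrix E inputs out v c = (\<chi> i j. if p i = j then 1 else 0)"
    using \<open>a \<in> inputs\<close> p_out p_coupling
    by (auto simp: vec_eq_iff gen_homeostasis_matrix_def generic_jacobian_def v_def c_def)
  then have "det (gen_homeostasis_matrix E inputs out v c) = of_int (sign p)"
    by (simp add: det_permutation_matrix[OF p])
  then have "det (gen_homeostasis_matrix E inputs out v c) \<noteq> 0"
    by (simp add: sign_def)
  then show ?thesis
    by blast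
qed

end
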